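(* Let $\varphi(s,v)=\vec c(s)+v\vec q(s)$ be a developable timelike ruled surface of type $M^1_+$ in $\mathbb{R}^3_1$, and let $R$ be a nonzero constant. A developable spacelike ruled surface $\varphi^*$ of type $M^2_+$ with striction curve $\vec c^*=\vec c+R\vec a$ is a Mannheim offset of $\varphi$ if and only if $$\frac{d\kappa}{ds}=-\frac{1}{R}\left(R^2\kappa^2\left(\frac{ds_1}{ds}\right)^2+1\right)-\frac{1}{ds_1/ds}\frac{d^2s_1}{ds^2}\kappa .$$
   Context: Work in Minkowski 3-space $\mathbb{R}^3_1$ with $\langle x,y\rangle=-x_1y_1+x_2y_2+x_3y_3$, $\|x\|=\sqrt{|\langle x,x\rangle|}$, and Lorentzian cross product $x\times y=(x_2y_3-x_3y_2,\,x_1y_3-x_3y_1,\,x_2y_1-x_1y_2)$. A ruled surface is $\varphi(s,v)=\vec c(s)+v\vec q(s)$ with $\vec q$ a unit non-null vector field, $d\vec q/ds$ non-null, $\vec c$ the striction curve ($\langle d\vec q/ds,d\vec c/ds\rangle=0$) and $s$ the arc length of $\vec c$. Its Frenet frame $\{\vec q,\vec h,\vec a\}$ has central normal $\vec h=\frac{d\vec q/ds}{\|d\vec q/ds\|}$ and asymptotic normal $\vec a=\frac{(d\vec q/ds)\times\vec q}{\|d\vec q/ds\|}$. Type $M^1_+$: $\vec q$ and $\vec h$ spacelike (a timelike surface); type $M^2_+$: $\vec h$ timelike, $\vec q$ and $d\vec q/ds$ spacelike (a spacelike surface). Let $s_1$ be the arc length of the spherical image of $\vec q$ and $\kappa$ the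 conical curvature of the directing cone; for type $M^1_+$: $d\vec q/ds_1=\vec h$, $d\vec h/ds_1=-\vec q+\kappa\vec a$, $d\vec a/ds_1=\kappa\vec h$. A ruled surface is developable iff its distribution parameter $\det(d\vec c/ds,\vec q,d\vec q/ds)/\langle d\vec q/ds,d\vec q/ds\rangle$ vanishes identically. A ruled surface $\varphi^*(s,v)=\vec c^*(s)+v\vec q^*(s)$ with striction curve $\vec c^*$ and Frenet frame $\{\vec q^*,\vec h^*,\vec a^*\}$ is a Mannheim offset of $\varphi$ if its rulings correspond one-to-one with those of $\varphi$ and $\vec h^*=\vec a$. *)

theory Defs
  imports "HOL-Analysis.Analysis"
begin

definition lor_inner :: "real^3 \<Rightarrow> real^3 \<Rightarrow> real" where
  "lor_inner x y = - (x$1 * y$1) + x$2 * y$2 + x$3 * y$3"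

definition lor_norm :: "real^3 \<Rightarrow> real" where
  "lor_norm x = sqrt \<bar>lor_inner x x\<bar>"

definition lor_cross :: "real^3 \<Rightarrow> real^3 \<Rightarrow> real^3" where
  "lor_cross x y = vector [x$2 * y$3 - x$3 * y$2, x$1 * y$3 - x$3 * y$1, x$2 * y$1 - x$1 * y$2]"

definition spacelike :: "real^3 \<Rightarrow> bool" where
  "spacelike x \<longleftrightarrow> lor_inner x x > 0"

definition timelike :: "real^3 \<Rightarrow> bool" where
  "timelike x \<longleftrightarrow> lor_inner x x < 0"

abbreviation D :: "(real \<Rightarrow> real^3) \<Rightarrow> real \<Rightarrow> real^3" where
  "D f s \<equiv> vector_derivative f (at s)"

text \<open>Ruled surface phi(s,v) = c(s) + v q(s) over the open parameter set I, with
  q a unit non-null vector field, dq/ds non-null and c the striction curve.\<close>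
definition ruled_surface :: "real set \<Rightarrow> (real \<Rightarrow> real^3) \<Rightarrow> (real \<Rightarrow> real^3) \<Rightarrow> bool" where
  "ruled_surface I c q \<longleftrightarrow> (\<forall>s\<in>I.
      c differentiable (at s) \<and> q differentiable (at s) \<and>
      \<bar>lor_inner (q s) (q s)\<bar> = 1 \<and>
      lor_inner (D q s) (D q s) \<noteq> 0 \<and>
      lor_inner (D q s) (D c s) = 0)"

definition central_normal :: "(real \<Rightarrow> real^3) \<Rightarrow> real \<Rightarrow> real^3" where
  "central_normal q s = (1 / lor_norm (D q s)) *\<^sub>R D q s"

definition asymptotic_normal :: "(real \<Rightarrow> real^3) \<Rightarrow> real \<Rightarrow> real^3" where
  "asymptotic_normal q s = (1 / lor_norm (D q s)) *\<^sub>R lor_cross (D q s) (q s)"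

definition distribution_parameter :: "(real \<Rightarrow> real^3) \<Rightarrow> (real \<Rightarrow> real^3) \<Rightarrow> real \<Rightarrow> real" where
  "distribution_parameter c q s =
     det (vector [D c s, q s, D q s] :: real^3^3) / lor_inner (D q s) (D q s)"

definition developable :: "real set \<Rightarrow> (real \<Rightarrow> real^3) \<Rightarrow> (real \<Rightarrow> real^3) \<Rightarrow> bool" where
  "developable I c q \<longleftrightarrow> (\<forall>s\<in>I. distribution_parameter c q s = 0)"

definition type_M1_plus :: "real set \<Rightarrow> (real \<Rightarrow> real^3) \<Rightarrow> bool" where
  "type_M1_plus I q \<longleftrightarrow> (\<forall>s\<in>I. spacelike (q s) \<and> spacelike (central_normal q s))"

definition type_M2_plus :: "real set \<Rightarrow> (real \<Rightarrow> real^3) \<Rightarrow> bool" where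
  "type_M2_plus I q \<longleftrightarrow> (\<forall>s\<in>I. spacelike (q s) \<and> timelike (central_normal q s))"

text \<open>Mannheim offset: rulings correspond via the common parameter s, and h* = a.\<close>
definition mannheim_offset :: "real set \<Rightarrow> (real \<Rightarrow> real^3) \<Rightarrow> (real \<Rightarrow> real^3) \<Rightarrow> bool" where
  "mannheim_offset I q qs \<longleftrightarrow> (\<forall>s\<in>I. central_normal qs s = asymptotic_normal q s)"

end

theory Submission
  imports Defs
begin

text \<open>Along the striction curve of a developable surface of type \<open>M\<^sup>1\<^sub>+\<close> with \<open>c' = q\<close>, the offset
  curve \<open>c + R a\<close> has tangent \<open>q + f h\<close> with \<open>f = R \<kappa> s\<^sub>1'\<close>. A ruling \<open>q\<^sup>*\<close> whose derivative is
  parallel to \<open>a\<close> is a unit vector orthogonal to \<open>a\<close>, so \<open>q\<^sup>* = u q + w h\<close> with \<open>u\<^sup>2 + w\<^sup>2 = 1\<close>,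
  \<open>u' = s\<^sub>1' w\<close>, \<open>w' = -s\<^sub>1' u\<close>; developability forces \<open>w = f u\<close>. Differentiating gives the
  Riccati equation \<open>f' = -s\<^sub>1' (1 + f\<^sup>2)\<close>, which is the stated condition on \<open>\<kappa>\<close>.
  Conversely, a solution of the Riccati equation yields \<open>q\<^sup>* = sgn R (q + f h) / sqrt (1 + f\<^sup>2)\<close>.\<close>

lemma lor_inner_simps [simp]:
  "lor_inner (x + y) z = lor_inner x z + lor_inner y z"
  "lor_inner z (x + y) = lor_inner z x + lor_inner z y"
  "lor_inner (x - y) z = lor_inner x z - lor_inner y z"
  "lor_inner z (x - y) = lor_inner z x - lor_inner z y"
  "lor_inner (- x) z = - lor_inner x z"
  "lor_inner z (- x) = - lor_inner z x"
  "lor_inner (r *\<^sub>R x) z = r * lor_inner x z"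
  "lor_inner z (r *\<^sub>R x) = r * lor_inner z x"
  "lor_inner 0 z = 0" "lor_inner z 0 = 0"
  by (simp_all add: lor_inner_def algebra_simps)

lemma lor_inner_commute: "lor_inner x y = lor_inner y x"
  by (simp add: lor_inner_def algebra_simps)

lemma lor_norm_scaleR: "lor_norm (r *\<^sub>R x) = \<bar>r\<bar> * lor_norm x"
  by (simp add: lor_norm_def abs_mult real_sqrt_mult power2_eq_square[symmetric])

lemma lor_cross_nth:
  "lor_cross x y $ 1 = x$2 * y$3 - x$3 * y$2"
  "lor_cross x y $ 2 = x$1 * y$3 - x$3 * y$1"
  "lor_cross x y $ 3 = x$2 * y$1 - x$1 * y$2"
  by (simp_all add: lor_cross_def vector_def)

lemma lor_cross_scaleR_left: "lor_cross (r *\<^sub>R x) y = r *\<^sub>R lor_cross x y"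
  by (simp add: vec_eq_iff forall_3 lor_cross_nth algebra_simps)

lemma lor_cross_lincomb:
  "lor_cross (a *\<^sub>R x + b *\<^sub>R y) (c *\<^sub>R x + d *\<^sub>R y) = (a * d - b * c) *\<^sub>R lor_cross x y"
  by (simp add: vec_eq_iff forall_3 lor_cross_nth algebra_simps)

lemma lor_inner_lor_cross_self:
  "lor_inner (lor_cross x y) x = 0" "lor_inner (lor_cross x y) y = 0"
  by (simp_all add: lor_inner_def lor_cross_nth algebra_simps)

lemma lor_inner_lor_cross_lor_cross:
  "lor_inner (lor_cross x y) (lor_cross z t) =
     - (lor_inner x z * lor_inner y t - lor_inner x t * lor_inner y z)"
  by (simp add: lor_inner_def lor_cross_nth algebra_simps)

lemma det_vector3_eq_lor_inner_lor_cross: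
  "det (vector [x, y, z] :: real^3^3) = - lor_inner z (lor_cross x y)"
  by (simp add: det_3 vector_def lor_inner_def lor_cross_nth algebra_simps)

text \<open>Gram determinant of \<open>x, y, z\<close>; the sign reflects that the metric has index 1.\<close>
lemma lor_inner_lor_cross_square:
  "(lor_inner z (lor_cross x y))\<^sup>2 =
     - (lor_inner x x * lor_inner y y * lor_inner z z
        + 2 * lor_inner x y * lor_inner y z * lor_inner x z - lor_inner x x * (lor_inner y z)\<^sup>2
        - lor_inner y y * (lor_inner x z)\<^sup>2 - lor_inner z z * (lor_inner x y)\<^sup>2)"
  by (simp add: lor_inner_def lor_cross_nth algebra_simps power2_eq_square)

lemma has_real_derivative_lor_inner:
  assumes "(f has_vector_derivative f') (at x)" "(g has_vector_derivative g') (at x)"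
  shows "((\<lambda>t. lor_inner (f t) (g t)) has_real_derivative
           lor_inner f' (g x) + lor_inner (f x) g') (at x)"
proof -
  have nth: "((\<lambda>t. k t $ i) has_real_derivative k' $ i) (at x)"
    if "(k has_vector_derivative k') (at x)" for k k' and i :: 3
    using bounded_linear.has_vector_derivative[OF bounded_linear_vec_nth that]
    by (simp add: has_real_derivative_iff_has_vector_derivative)
  note f = nth[OF assms(1)] and g = nth[OF assms(2)]
  show ?thesis unfolding lor_inner_def
    by (rule derivative_eq_intros f g refl | simp add: algebra_simps)+
qed

lemma lor_inner_derivative_orthogonal_of_unit:
  assumes "open I" "s \<in> I" "\<And>t. t \<in> I \<Longrightarrow> lor_inner (x t) (x t) = 1"
    and "(x has_vector_derivative x') (at s)"
  shows "lor_inner x' (x s) = 0"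
proof -
  have "((\<lambda>t. lor_inner (x t) (x t)) has_real_derivative
          lor_inner x' (x s) + lor_inner (x s) x') (at s)"
    using has_real_derivative_lor_inner[OF assms(4) assms(4)] .
  moreover have "((\<lambda>t. lor_inner (x t) (x t)) has_real_derivative 0) (at s)"
    by (rule has_field_derivative_transform_within_open[of "\<lambda>t. 1" 0 s I]) (use assms in auto)
  ultimately show ?thesis
    using DERIV_unique by (fastforce simp: lor_inner_commute[of "x s"])
qed

lemma central_normal_eq_iff:
  assumes "\<bar>lor_inner b b\<bar> = 1"
  shows "central_normal x t = b \<longleftrightarrow> (\<exists>L>0. D x t = L *\<^sub>R b)"
proof
  assume cn: "central_normal x t = b"
  have "lor_norm (D x t) \<noteq> 0"
  proof
    assume "lor_norm (D x t) = 0"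
    then have "b = 0" using cn by (simp add: central_normal_def)
    then show False using assms by simp
  qed
  moreover have "lor_norm (D x t) \<ge> 0" by (simp add: lor_norm_def)
  ultimately show "\<exists>L>0. D x t = L *\<^sub>R b"
    using cn by (intro exI[of _ "lor_norm (D x t)"]) (auto simp: central_normal_def)
next
  assume "\<exists>L>0. D x t = L *\<^sub>R b"
  then obtain L where "L > 0" "D x t = L *\<^sub>R b" by blast
  moreover have "lor_norm b = 1" using assms by (simp add: lor_norm_def)
  ultimately show "central_normal x t = b"
    by (simp add: central_normal_def lor_norm_scaleR)
qed

text \<open>\<open>(u, w) = \<epsilon> (cos \<theta>, sin \<theta>)\<close> for \<open>f = tan \<theta>\<close>, so that \<open>\<theta>' = -\<sigma>\<close>.\<close>
lemma riccati_rotation: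
  fixes f \<sigma> :: "real \<Rightarrow> real" and \<epsilon> :: real
  assumes f: "(f has_real_derivative - \<sigma> s * (1 + (f s)\<^sup>2)) (at s)"
  defines "u \<equiv> \<lambda>t. \<epsilon> / sqrt (1 + (f t)\<^sup>2)"
  shows "(u has_real_derivative \<sigma> s * (f s * u s)) (at s)"
    and "((\<lambda>t. f t * u t) has_real_derivative - \<sigma> s * u s) (at s)"
proof -
  define r where "r = sqrt (1 + (f s)\<^sup>2)"
  have pos: "0 < 1 + (f s)\<^sup>2" by (simp add: add_pos_nonneg)
  then have r: "r > 0" "r\<^sup>2 = 1 + (f s)\<^sup>2" by (simp_all add: r_def)
  have "((\<lambda>t. 1 + (f t)\<^sup>2) has_real_derivative 2 * f s * (- \<sigma> s * (1 + (f s)\<^sup>2))) (at s)"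
    using f by (auto intro!: derivative_eq_intros)
  from DERIV_chain2[OF DERIV_real_sqrt[OF pos] this]
  have "((\<lambda>t. sqrt (1 + (f t)\<^sup>2)) has_real_derivative
          inverse r / 2 * (2 * f s * (- \<sigma> s * r\<^sup>2))) (at s)"
    by (simp add: r_def[symmetric] r(2))
  moreover have "inverse r / 2 * (2 * f s * (- \<sigma> s * r\<^sup>2)) = - f s * \<sigma> s * r"
    using r(1) by (simp add: field_simps power2_eq_square)
  ultimately have "((\<lambda>t. sqrt (1 + (f t)\<^sup>2)) has_real_derivative - f s * \<sigma> s * r) (at s)"
    by (simp only:)
  from DERIV_divide[OF DERIV_const[of \<epsilon>] this] r(1)
  have "(u has_real_derivative (0 * r - \<epsilon> * (- f s * \<sigma> s * r)) / (r * r)) (at s)"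
    by (simp add: u_def r_def[symmetric])
  moreover have "(0 * r - \<epsilon> * (- f s * \<sigma> s * r)) / (r * r) = \<sigma> s * (f s * u s)"
    using r by (simp add: u_def r_def[symmetric] field_simps)
  ultimately show du: "(u has_real_derivative \<sigma> s * (f s * u s)) (at s)" by simp
  have "((\<lambda>t. f t * u t) has_real_derivative
          - \<sigma> s * (1 + (f s)\<^sup>2) * u s + f s * (\<sigma> s * (f s * u s))) (at s)"
    using f du by (auto intro!: derivative_eq_intros)
  then show "((\<lambda>t. f t * u t) has_real_derivative - \<sigma> s * u s) (at s)"
    by (simp add: algebra_simps power2_eq_square)
qed

locale M1_frenet_frame =
  fixes I :: "real set" and c q h a :: "real \<Rightarrow> real^3" and \<sigma> \<kappa> :: "real \<Rightarrow> real"
  assumes open_I: "open I"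
    and c_deriv: "\<And>s. s \<in> I \<Longrightarrow> (c has_vector_derivative q s) (at s)"
    and q_deriv: "\<And>s. s \<in> I \<Longrightarrow> (q has_vector_derivative \<sigma> s *\<^sub>R h s) (at s)"
    and h_deriv: "\<And>s. s \<in> I \<Longrightarrow>
          (h has_vector_derivative \<sigma> s *\<^sub>R (- q s + \<kappa> s *\<^sub>R a s)) (at s)"
    and a_deriv: "\<And>s. s \<in> I \<Longrightarrow> (a has_vector_derivative (\<sigma> s * \<kappa> s) *\<^sub>R h s) (at s)"
    and \<sigma>_pos: "\<And>s. s \<in> I \<Longrightarrow> \<sigma> s > 0"
    and \<sigma>_differentiable: "\<And>s. s \<in> I \<Longrightarrow> \<sigma> differentiable (at s)"
    and \<kappa>_differentiable: "\<And>s. s \<in> I \<Longrightarrow> \<kappa> differentiable (at s)"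
    and q_unit: "\<And>s. s \<in> I \<Longrightarrow> lor_inner (q s) (q s) = 1"
    and h_unit: "\<And>s. s \<in> I \<Longrightarrow> lor_inner (h s) (h s) = 1"
    and a_unit: "\<And>s. s \<in> I \<Longrightarrow> lor_inner (a s) (a s) = -1"
    and q_h_orthogonal: "\<And>s. s \<in> I \<Longrightarrow> lor_inner (q s) (h s) = 0"
    and a_eq_lor_cross: "\<And>s. s \<in> I \<Longrightarrow> a s = lor_cross (h s) (q s)"
begin

lemma frame_inner:
  assumes "s \<in> I"
  shows "lor_inner (q s) (q s) = 1" "lor_inner (h s) (h s) = 1" "lor_inner (a s) (a s) = -1"
    "lor_inner (q s) (h s) = 0" "lor_inner (h s) (q s) = 0"
    "lor_inner (q s) (a s) = 0" "lor_inner (a s) (q s) = 0"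
    "lor_inner (h s) (a s) = 0" "lor_inner (a s) (h s) = 0"
proof -
  have "lor_inner (a s) (q s) = 0" "lor_inner (a s) (h s) = 0"
    by (simp_all add: a_eq_lor_cross[OF assms] lor_inner_lor_cross_self)
  then show "lor_inner (q s) (a s) = 0" "lor_inner (a s) (q s) = 0"
    "lor_inner (h s) (a s) = 0" "lor_inner (a s) (h s) = 0"
    by (simp_all add: lor_inner_commute[of _ "a s"])
  show "lor_inner (h s) (q s) = 0" "lor_inner (q s) (h s) = 0"
    using q_h_orthogonal[OF assms] by (simp_all add: lor_inner_commute[of "h s"])
qed (use assms q_unit h_unit a_unit in auto)

text \<open>The offset striction curve \<open>c + R a\<close> has tangent \<open>q + offset_slope R s \<cdot> h\<close>.\<close>
definition offset_slope :: "real \<Rightarrow> real \<Rightarrow> real" where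
  "offset_slope R s = R * (\<sigma> s * \<kappa> s)"

lemma offset_deriv:
  assumes "s \<in> I"
  shows "((\<lambda>t. c t + R *\<^sub>R a t) has_vector_derivative q s + offset_slope R s *\<^sub>R h s) (at s)"
  using c_deriv[OF assms] a_deriv[OF assms]
  by (auto intro!: derivative_eq_intros simp: offset_slope_def algebra_simps)

lemma offset_slope_deriv:
  assumes "s \<in> I"
  shows "(offset_slope R has_real_derivative R * (deriv \<sigma> s * \<kappa> s + \<sigma> s * deriv \<kappa> s)) (at s)"
proof -
  have "(\<sigma> has_real_derivative deriv \<sigma> s) (at s)" "(\<kappa> has_real_derivative deriv \<kappa> s) (at s)"
    using \<sigma>_differentiable \<kappa>_differentiable assms DERIV_deriv_iff_real_differentiable by blast+
  then show ?thesis
    unfolding offset_slope_def[abs_def] by (auto intro!: derivative_eq_intros simp: algebra_simps)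
qed

lemma riccati_iff_curvature_ode:
  assumes "R \<noteq> 0" "s \<in> I"
  shows "deriv (offset_slope R) s = - \<sigma> s * (1 + (offset_slope R s)\<^sup>2) \<longleftrightarrow>
    deriv \<kappa> s = - (1 / R) * (R\<^sup>2 * (\<kappa> s)\<^sup>2 * (\<sigma> s)\<^sup>2 + 1) - (1 / \<sigma> s) * deriv \<sigma> s * \<kappa> s"
proof -
  have \<sigma>: "\<sigma> s > 0" using \<sigma>_pos[OF assms(2)] .
  have "deriv (offset_slope R) s = R * (deriv \<sigma> s * \<kappa> s + \<sigma> s * deriv \<kappa> s)"
    using DERIV_imp_deriv[OF offset_slope_deriv[OF assms(2)]] .
  moreover have "R * (deriv \<sigma> s * \<kappa> s + \<sigma> s * x) = - \<sigma> s * (1 + (R * (\<sigma> s * \<kappa> s))\<^sup>2)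
      \<longleftrightarrow> x = - (1 / R) * (R\<^sup>2 * (\<kappa> s)\<^sup>2 * (\<sigma> s)\<^sup>2 + 1) - (1 / \<sigma> s) * deriv \<sigma> s * \<kappa> s"
    for x
    using assms(1) \<sigma> by (simp add: field_simps power2_eq_square)
  ultimately show ?thesis by (simp add: offset_slope_def)
qed

text \<open>Abstract counterpart of a developable Mannheim offset ruling through \<open>c + R a\<close>: the
  derivative condition encodes \<open>h\<^sup>* = a\<close>, the last one developability.\<close>
definition mannheim_ruling :: "real \<Rightarrow> (real \<Rightarrow> real^3) \<Rightarrow> bool" where
  "mannheim_ruling R qs \<longleftrightarrow> (\<forall>t\<in>I.
     (\<exists>L>0. (qs has_vector_derivative L *\<^sub>R a t) (at t)) \<and>
     lor_inner (qs t) (qs t) = 1 \<and>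
     lor_inner (a t) (lor_cross (q t + offset_slope R t *\<^sub>R h t) (qs t)) = 0)"

lemma unit_orthogonal_to_a_coordinates:
  assumes s: "s \<in> I" and "lor_inner x x = 1" "lor_inner x (a s) = 0"
  shows "(lor_inner x (q s))\<^sup>2 + (lor_inner x (h s))\<^sup>2 = 1"
proof -
  have "(lor_inner x (lor_cross (h s) (q s)))\<^sup>2 = 0"
    using assms(3) by (simp add: a_eq_lor_cross[OF s])
  moreover have "lor_inner (h s) x = lor_inner x (h s)" "lor_inner (q s) x = lor_inner x (q s)"
    by (simp_all add: lor_inner_commute)
  ultimately show ?thesis
    unfolding lor_inner_lor_cross_square using assms(2) frame_inner[OF s] by algebra
qed

lemma riccati_of_mannheim_ruling:
  assumes ruling: "mannheim_ruling R qs" and s: "s \<in> I"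
  shows "deriv (offset_slope R) s = - \<sigma> s * (1 + (offset_slope R s)\<^sup>2)"
proof -
  define f where "f = offset_slope R"
  define u where "u = (\<lambda>t. lor_inner (qs t) (q t))"
  define w where "w = (\<lambda>t. lor_inner (qs t) (h t))"
  have ruling_at: "(\<exists>L>0. (qs has_vector_derivative L *\<^sub>R a t) (at t)) \<and>
      lor_inner (qs t) (qs t) = 1 \<and> lor_inner (a t) (lor_cross (q t + f t *\<^sub>R h t) (qs t)) = 0"
    if "t \<in> I" for t
    using ruling that by (simp add: mannheim_ruling_def f_def)
  obtain L where L: "L > 0" "(qs has_vector_derivative L *\<^sub>R a s) (at s)"
    using ruling_at[OF s] by blast
  have qs_a: "lor_inner (qs s) (a s) = 0"
    using lor_inner_derivative_orthogonal_of_unit[OF open_I s _ L(2)] ruling_at L(1)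
    by (simp add: lor_inner_commute[of "a s"])
  have w_eq: "w t = f t * u t" if t: "t \<in> I" for t
    using ruling_at[OF t]
    by (simp add: a_eq_lor_cross[OF t] lor_inner_lor_cross_lor_cross frame_inner[OF t] u_def w_def
        lor_inner_commute[of "q t" "qs t"] lor_inner_commute[of "h t" "qs t"])
  have unit: "(u s)\<^sup>2 + (w s)\<^sup>2 = 1"
    using unit_orthogonal_to_a_coordinates[OF s _ qs_a] ruling_at[OF s] by (simp add: u_def w_def)
  have du: "(u has_real_derivative \<sigma> s * w s) (at s)"
    using has_real_derivative_lor_inner[OF L(2) q_deriv[OF s]]
    by (simp add: u_def w_def frame_inner[OF s])
  have dw: "(w has_real_derivative - \<sigma> s * u s) (at s)"
    using has_real_derivative_lor_inner[OF L(2) h_deriv[OF s]]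
    by (simp add: u_def w_def frame_inner[OF s] qs_a)
  have df: "(f has_real_derivative deriv f s) (at s)"
    using offset_slope_deriv[OF s] DERIV_imp_deriv unfolding f_def by metis
  have "(w has_real_derivative deriv f s * u s + f s * (\<sigma> s * w s)) (at s)"
  proof (rule has_field_derivative_transform_within_open[OF _ open_I s])
    show "((\<lambda>t. f t * u t) has_real_derivative deriv f s * u s + f s * (\<sigma> s * w s)) (at s)"
      using df du by (auto intro!: derivative_eq_intros)
  qed (use w_eq in auto)
  with dw have "deriv f s * u s + f s * (\<sigma> s * w s) = - \<sigma> s * u s"
    using DERIV_unique by blast
  then have "(deriv f s + \<sigma> s * (1 + (f s)\<^sup>2)) * u s = 0"
    by (simp add: w_eq[OF s] algebra_simps power2_eq_square)
  moreover have "u s \<noteq> 0"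
    using unit w_eq[OF s] by auto
  ultimately show ?thesis
    unfolding f_def by (simp add: eq_neg_iff_add_eq_0)
qed

lemma mannheim_ruling_of_riccati:
  assumes R: "R \<noteq> 0" and \<kappa>_nonzero: "\<forall>s\<in>I. \<kappa> s \<noteq> 0"
    and riccati: "\<forall>s\<in>I. deriv (offset_slope R) s = - \<sigma> s * (1 + (offset_slope R s)\<^sup>2)"
  shows "\<exists>qs. mannheim_ruling R qs"
proof -
  define f where "f = offset_slope R"
  define u where "u = (\<lambda>t. sgn R / sqrt (1 + (f t)\<^sup>2))"
  define qs where "qs = (\<lambda>t. u t *\<^sub>R q t + (f t * u t) *\<^sub>R h t)"
  have "mannheim_ruling R qs"
    unfolding mannheim_ruling_def f_def[symmetric]
  proof (intro ballI conjI)
    fix t assume t: "t \<in> I"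
    have "(f has_real_derivative deriv f t) (at t)"
      using offset_slope_deriv[OF t] DERIV_imp_deriv unfolding f_def by metis
    then have "(f has_real_derivative - \<sigma> t * (1 + (f t)\<^sup>2)) (at t)"
      using riccati t by (simp add: f_def)
    then have rotation: "(u has_real_derivative \<sigma> t * (f t * u t)) (at t)"
        "((\<lambda>t. f t * u t) has_real_derivative - \<sigma> t * u t) (at t)"
      unfolding u_def by (rule riccati_rotation[where \<sigma> = \<sigma>])+
    have "(qs has_vector_derivative
        u t *\<^sub>R (\<sigma> t *\<^sub>R h t) + (\<sigma> t * (f t * u t)) *\<^sub>R q t +
        ((f t * u t) *\<^sub>R (\<sigma> t *\<^sub>R (- q t + \<kappa> t *\<^sub>R a t)) + (- \<sigma> t * u t) *\<^sub>R h t)) (at t)"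
      unfolding qs_def by (intro derivative_intros rotation q_deriv[OF t] h_deriv[OF t])
    then have "(qs has_vector_derivative (f t * u t * \<sigma> t * \<kappa> t) *\<^sub>R a t) (at t)"
      by (simp add: algebra_simps)
    moreover have "f t * u t * \<sigma> t * \<kappa> t = \<bar>R\<bar> * (\<sigma> t * \<kappa> t)\<^sup>2 / sqrt (1 + (f t)\<^sup>2)"
      by (simp add: f_def u_def offset_slope_def abs_sgn power2_eq_square mult.commute
          mult.left_commute)
    moreover have "\<bar>R\<bar> * (\<sigma> t * \<kappa> t)\<^sup>2 / sqrt (1 + (f t)\<^sup>2) > 0"
      using R \<sigma>_pos[OF t] \<kappa>_nonzero t by (simp add: add_pos_nonneg)
    ultimately show "\<exists>L>0. (qs has_vector_derivative L *\<^sub>R a t) (at t)"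
      by auto
    have "lor_inner (qs t) (qs t) = (sgn R)\<^sup>2 * (1 + (f t)\<^sup>2) / (sqrt (1 + (f t)\<^sup>2))\<^sup>2"
      by (simp add: qs_def u_def frame_inner[OF t] power2_eq_square field_simps)
    moreover have "1 + (f t)\<^sup>2 > 0" by (simp add: add_pos_nonneg)
    ultimately show "lor_inner (qs t) (qs t) = 1"
      using R by (simp add: sgn_if)
    have "lor_cross (1 *\<^sub>R q t + f t *\<^sub>R h t) (u t *\<^sub>R q t + (f t * u t) *\<^sub>R h t) = 0"
      unfolding lor_cross_lincomb by simp
    then show "lor_inner (a t) (lor_cross (q t + f t *\<^sub>R h t) (qs t)) = 0"
      by (simp add: qs_def)
  qed
  then show ?thesis by blast
qed

lemma offset_surface_iff_mannheim_ruling: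
  "ruled_surface I (\<lambda>s. c s + R *\<^sub>R a s) qs \<and> type_M2_plus I qs \<and>
   developable I (\<lambda>s. c s + R *\<^sub>R a s) qs \<and> (\<forall>s\<in>I. central_normal qs s = a s)
   \<longleftrightarrow> mannheim_ruling R qs"
proof -
  define cs where "cs = (\<lambda>s. c s + R *\<^sub>R a s)"
  have cs_deriv: "(cs has_vector_derivative q t + offset_slope R t *\<^sub>R h t) (at t)" if "t \<in> I" for t
    using offset_deriv[OF that] by (simp add: cs_def)
  have a_unit_abs: "\<bar>lor_inner (a t) (a t)\<bar> = 1" if "t \<in> I" for t
    using frame_inner(3)[OF that] by simp
  have det_eq: "det (vector [D cs t, qs t, L *\<^sub>R a t] :: real^3^3) =
      - L * lor_inner (a t) (lor_cross (q t + offset_slope R t *\<^sub>R h t) (qs t))"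
    if "t \<in> I" for t L
    using vector_derivative_at[OF cs_deriv[OF that]] by (simp add: det_vector3_eq_lor_inner_lor_cross)
  show ?thesis
    unfolding cs_def[symmetric]
  proof
    assume offset: "ruled_surface I cs qs \<and> type_M2_plus I qs \<and> developable I cs qs \<and>
      (\<forall>s\<in>I. central_normal qs s = a s)"
    show "mannheim_ruling R qs"
      unfolding mannheim_ruling_def
    proof (intro ballI conjI)
      fix t assume t: "t \<in> I"
      have ruled: "qs differentiable (at t)" "\<bar>lor_inner (qs t) (qs t)\<bar> = 1"
        "lor_inner (D qs t) (D qs t) \<noteq> 0"
        using offset t by (auto simp: ruled_surface_def)
      obtain L where L: "L > 0" "D qs t = L *\<^sub>R a t"
        using offset t central_normal_eq_iff[OF a_unit_abs[OF t]] by blast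
      show "\<exists>L>0. (qs has_vector_derivative L *\<^sub>R a t) (at t)"
        using L vector_derivative_works ruled(1) by metis
      show "lor_inner (qs t) (qs t) = 1"
        using offset t ruled(2) by (auto simp: type_M2_plus_def spacelike_def)
      have "det (vector [D cs t, qs t, D qs t] :: real^3^3) = 0"
        using offset t ruled(3) by (auto simp: developable_def distribution_parameter_def)
      then show "lor_inner (a t) (lor_cross (q t + offset_slope R t *\<^sub>R h t) (qs t)) = 0"
        using L det_eq[OF t] by simp
    qed
  next
    assume ruling: "mannheim_ruling R qs"
    have pointwise: "cs differentiable (at t) \<and> qs differentiable (at t) \<and> lor_inner (qs t) (qs t) = 1 \<and>
        lor_inner (D qs t) (D qs t) \<noteq> 0 \<and> lor_inner (D qs t) (D cs t) = 0 \<and>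
        central_normal qs t = a t \<and> det (vector [D cs t, qs t, D qs t] :: real^3^3) = 0"
      if t: "t \<in> I" for t
    proof -
      obtain L where L: "L > 0" "(qs has_vector_derivative L *\<^sub>R a t) (at t)"
        "lor_inner (qs t) (qs t) = 1"
        "lor_inner (a t) (lor_cross (q t + offset_slope R t *\<^sub>R h t) (qs t)) = 0"
        using ruling t unfolding mannheim_ruling_def by blast
      have Dqs: "D qs t = L *\<^sub>R a t"
        using vector_derivative_at[OF L(2)] .
      show ?thesis
        using L Dqs det_eq[OF t, of L] central_normal_eq_iff[OF a_unit_abs[OF t]]
          vector_derivative_at[OF cs_deriv[OF t]] frame_inner[OF t]
          differentiableI_vector[OF cs_deriv[OF t]] differentiableI_vector[OF L(2)]
        by auto
    qed
    show "ruled_surface I cs qs \<and> type_M2_plus I qs \<and> developable I cs qs \<and>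
        (\<forall>s\<in>I. central_normal qs s = a s)"
      using pointwise frame_inner(3)
      by (auto simp: ruled_surface_def type_M2_plus_def developable_def
          distribution_parameter_def spacelike_def timelike_def)
  qed
qed

end

lemma M1_frenet_frame_of_ruled_surface:
  assumes "open I" and ruled: "ruled_surface I c q" and M1: "type_M1_plus I q"
    and s1_arclength: "\<forall>s\<in>I. (s1 has_real_derivative lor_norm (D q s)) (at s)"
    and frenet_h: "\<forall>s\<in>I. (central_normal q has_vector_derivative
          deriv s1 s *\<^sub>R (- q s + \<kappa> s *\<^sub>R asymptotic_normal q s)) (at s)"
    and frenet_a: "\<forall>s\<in>I. (asymptotic_normal q has_vector_derivative
          (deriv s1 s * \<kappa> s) *\<^sub>R central_normal q s) (at s)"
    and "\<forall>s\<in>I. \<kappa> differentiable (at s)" "\<forall>s\<in>I. deriv s1 differentiable (at s)"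
    and orient: "\<forall>s\<in>I. D c s = q s"
  shows "M1_frenet_frame I c q (central_normal q) (asymptotic_normal q) (deriv s1) \<kappa>"
proof -
  have frame: "(c has_vector_derivative q s) (at s) \<and>
      (q has_vector_derivative deriv s1 s *\<^sub>R central_normal q s) (at s) \<and> deriv s1 s > 0 \<and>
      lor_inner (q s) (q s) = 1 \<and> lor_inner (central_normal q s) (central_normal q s) = 1 \<and>
      lor_inner (asymptotic_normal q s) (asymptotic_normal q s) = -1 \<and>
      lor_inner (q s) (central_normal q s) = 0 \<and>
      asymptotic_normal q s = lor_cross (central_normal q s) (q s)"
    if s: "s \<in> I" for s
  proof -
    define n where "n = lor_norm (D q s)"
    have r: "c differentiable (at s)" "q differentiable (at s)" "\<bar>lor_inner (q s) (q s)\<bar> = 1"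
      "lor_inner (D q s) (D q s) \<noteq> 0" "lor_inner (D q s) (D c s) = 0"
      using ruled s unfolding ruled_surface_def by auto
    have spacelike: "spacelike (q s)" "spacelike (central_normal q s)"
      using M1 s unfolding type_M1_plus_def by auto
    have n: "deriv s1 s = n" "n > 0"
      using s1_arclength s r(4) DERIV_imp_deriv by (auto simp: n_def lor_norm_def)
    have h: "central_normal q s = (1 / n) *\<^sub>R D q s"
      by (simp add: central_normal_def n_def)
    have "lor_norm (central_normal q s) = 1"
      using n(2) by (simp add: h lor_norm_scaleR n_def)
    then have hh: "lor_inner (central_normal q s) (central_normal q s) = 1"
      using spacelike(2) by (simp add: lor_norm_def spacelike_def)
    have qq: "lor_inner (q s) (q s) = 1"
      using r(3) spacelike(1) by (simp add: spacelike_def)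
    have qh: "lor_inner (q s) (central_normal q s) = 0"
      using r(5) orient s by (simp add: h lor_inner_commute[of "D q s"])
    have a: "asymptotic_normal q s = lor_cross (central_normal q s) (q s)"
      by (simp add: asymptotic_normal_def h n_def lor_cross_scaleR_left)
    have "lor_inner (asymptotic_normal q s) (asymptotic_normal q s) = -1"
      using qh lor_inner_commute[of "q s" "central_normal q s"]
      by (simp add: a lor_inner_lor_cross_lor_cross hh qq)
    moreover have "D q s = deriv s1 s *\<^sub>R central_normal q s"
      using n by (simp add: h)
    moreover have "(c has_vector_derivative q s) (at s)" "(q has_vector_derivative D q s) (at s)"
      using r(1,2) orient s vector_derivative_works by metis+
    ultimately show ?thesis
      using n hh qq qh a by simp
  qed
  show ?thesis
    by (unfold_locales; use assms frame in blast)
qed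

theorem theorem6p2:
  fixes c q :: "real \<Rightarrow> real^3" and s1 \<kappa> :: "real \<Rightarrow> real"
    and I :: "real set" and R :: real
  assumes I_open: "open I"
    and ruled: "ruled_surface I c q"
    and arclength: "\<forall>s\<in>I. lor_norm (D c s) = 1"
    and M1: "type_M1_plus I q"
    and dev: "developable I c q"
    and s1_arclength: "\<forall>s\<in>I. (s1 has_real_derivative lor_norm (D q s)) (at s)"
    and frenet_h: "\<forall>s\<in>I. (central_normal q has_vector_derivative
          deriv s1 s *\<^sub>R (- q s + \<kappa> s *\<^sub>R asymptotic_normal q s)) (at s)"
    and frenet_a: "\<forall>s\<in>I. (asymptotic_normal q has_vector_derivative
          (deriv s1 s * \<kappa> s) *\<^sub>R central_normal q s) (at s)"
    and \<kappa>_diff: "\<forall>s\<in>I. \<kappa> differentiable (at s)"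
    and s1'_diff: "\<forall>s\<in>I. deriv s1 differentiable (at s)"
    and R_nz: "R \<noteq> 0"
    and orient: "\<forall>s\<in>I. D c s = q s"
    and \<kappa>_nz: "\<forall>s\<in>I. \<kappa> s \<noteq> 0"
  shows "(\<exists>qs :: real \<Rightarrow> real^3.
            ruled_surface I (\<lambda>s. c s + R *\<^sub>R asymptotic_normal q s) qs \<and>
            type_M2_plus I qs \<and>
            developable I (\<lambda>s. c s + R *\<^sub>R asymptotic_normal q s) qs \<and>
            mannheim_offset I q qs)
         \<longleftrightarrow>
         (\<forall>s\<in>I. deriv \<kappa> s =
            - (1 / R) * (R^2 * (\<kappa> s)^2 * (deriv s1 s)^2 + 1)
            - (1 / deriv s1 s) * deriv (deriv s1) s * \<kappa> s)"
proof -
  interpret frame: M1_frenet_frame I c q "central_normal q" "asymptotic_normal q" "deriv s1" \<kappa>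
    using M1_frenet_frame_of_ruled_surface[OF I_open ruled M1 s1_arclength frenet_h frenet_a
        \<kappa>_diff s1'_diff orient] .
  have "(\<exists>qs. ruled_surface I (\<lambda>s. c s + R *\<^sub>R asymptotic_normal q s) qs \<and> type_M2_plus I qs \<and>
            developable I (\<lambda>s. c s + R *\<^sub>R asymptotic_normal q s) qs \<and> mannheim_offset I q qs)
        \<longleftrightarrow> (\<exists>qs. frame.mannheim_ruling R qs)"
    using frame.offset_surface_iff_mannheim_ruling by (simp add: mannheim_offset_def)
  also have "\<dots> \<longleftrightarrow> (\<forall>s\<in>I. deriv (frame.offset_slope R) s =
                        - deriv s1 s * (1 + (frame.offset_slope R s)\<^sup>2))"
    using frame.riccati_of_mannheim_ruling frame.mannheim_ruling_of_riccati[OF R_nz] \<kappa>_nz by blast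
  also have "\<dots> \<longleftrightarrow> (\<forall>s\<in>I. deriv \<kappa> s =
            - (1 / R) * (R^2 * (\<kappa> s)^2 * (deriv s1 s)^2 + 1)
            - (1 / deriv s1 s) * deriv (deriv s1) s * \<kappa> s)"
    using frame.riccati_iff_curvature_ode[OF R_nz] by simp
  finally show ?thesis .
qed

end
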